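(* In the setting of the soft-label KNN classification utility, assume $N\ge\max(2,K)$ and let $K^*$ be an integer with $1\le K^*<N$. Write $a_i:=\mathbb 1[y_i=y_{\mathrm{test}}]$. Define $\widehat\phi\in\mathbb R^N$ by $\widehat\phi_i=\frac1N\big(\frac12-\frac1C\big)$ for $K^*\le i\le N$, and recursively for $i=K^*-1,K^*-2,\dots,1$, $$\widehat\phi_i=\widehat\phi_{i+1}+\frac{a_i-a_{i+1}}{N-1}\left[\sum_{j=1}^{K}\frac1j+\frac1K\Big(\frac{\min(i,K)(N-1)}{i}-K\Big)\right].$$ Then, with $\phi=(\phi_1,\dots,\phi_N)$ the Shapley values, $$\|\widehat\phi-\phi\|_\infty\le\frac1N\sum_{j=2}^{K-1}\frac1{j+1}+\frac{1}{\max(K^*,K)},$$ where the sum is empty (zero) when $K\le 2$.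
   Context: Training data $(x_i,y_i)$, $i\in\mathcal I=\{1,\dots,N\}$, with $x_i\in\mathbb R^d$ and labels in a set of $C\ge1$ classes; test point $(x_{\mathrm{test}},y_{\mathrm{test}})$; $K\ge 1$ an integer. Indices are sorted so that $\|x_1-x_{\mathrm{test}}\|\le\dots\le\|x_N-x_{\mathrm{test}}\|$ (Euclidean norm, ties broken by index). For nonempty $S\subseteq\mathcal I$, $\pi^{(S)}(j)$ is the $j$-th smallest index in $S$. The utility is $v(\emptyset)=\frac1C$ and, for $S\ne\emptyset$, $v(S)=\frac{1}{\min(K,|S|)}\sum_{j=1}^{\min(K,|S|)}\mathbb 1[y_{\pi^{(S)}(j)}=y_{\mathrm{test}}]$. The Shapley value of $i$ is $\phi_i=\frac1N\sum_{k=1}^{N}\binom{N-1}{k-1}^{-1}\sum_{S\subseteq\mathcal I\setminus\{i\},\,|S|=k-1}\big[v(S\cup\{i\})-v(S)\big]$. *)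

theory Defs
  imports "HOL-Analysis.Analysis"
begin

text \<open>Training indices are 1..N, already sorted by distance to the test point.
  pi_S S j = the j-th smallest index of S (j counted from 1).\<close>

definition pi_S :: "nat set \<Rightarrow> nat \<Rightarrow> nat" where
  "pi_S S j = sorted_list_of_set S ! (j - 1)"

definition knn_utility :: "nat \<Rightarrow> nat \<Rightarrow> (nat \<Rightarrow> 'c) \<Rightarrow> 'c \<Rightarrow> nat set \<Rightarrow> real" where
  "knn_utility K C y ytest S =
     (if S = {} then 1 / real C
      else (1 / real (min K (card S))) *
           (\<Sum>j = 1..min K (card S). (if y (pi_S S j) = ytest then 1 else 0)))"

definition shapley :: "nat \<Rightarrow> nat \<Rightarrow> nat \<Rightarrow> (nat \<Rightarrow> 'c) \<Rightarrow> 'c \<Rightarrow> nat \<Rightarrow> real" where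
  "shapley N K C y ytest i =
     (1 / real N) * (\<Sum>k = 1..N. (1 / real ((N - 1) choose (k - 1))) *
        (\<Sum>S \<in> {S. S \<subseteq> {1..N} - {i} \<and> card S = k - 1}.
           knn_utility K C y ytest (S \<union> {i}) - knn_utility K C y ytest S))"

end

theory Submission
  imports Defs
begin

(* Only coalitions in which a point is among the K nearest neighbours feel that point.
   For adjacent points i and i + 1, a coalition avoiding both gains the same from either
   unless i lands among its K nearest, and counting these coalitions with a
   Chu-Vandermonde sum gives the exact recursion
     phi i - phi (i + 1) = (a i - a (i + 1)) / (N - 1) * (H K - 1 + min i K * (N - 1) / (i * K)),
   the one defining phihat; so phihat - phi is constant on 1..K*.  For i >= K*, adding i to a
   coalition S moves the utility by at most 1 / min K (|S| + 1), and not at all unless i enters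
   the K nearest; the same counting then bounds |phi i - (1/2 - 1/C) / N| by
   (H K - 3/2) / N + 1 / max i K. *)

section \<open>Binomial identities and intersection counts\<close>

lemma sum_choose_mult_choose_diff:
  "(\<Sum>n\<le>m. (n choose j) * ((m - n) choose a)) = Suc m choose (j + a + 1)"
proof (induction m arbitrary: a)
  case 0
  then show ?case by (cases j; cases a) auto
next
  case (Suc m)
  show ?case
  proof (cases a)
    case 0
    then show ?thesis using sum_choose_upper[where n="Suc m" and m=j] by simp
  next
    case (Suc b)
    have "(\<Sum>n\<le>Suc m. (n choose j) * ((Suc m - n) choose a))
        = (\<Sum>n\<le>m. (n choose j) * ((m - n) choose b) + (n choose j) * ((m - n) choose a))"
      using Suc by (simp, intro sum.cong) (auto simp: Suc_diff_le algebra_simps)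
    also have "\<dots> = (Suc m choose (j + b + 1)) + (Suc m choose (j + a + 1))"
      by (simp only: sum.distrib Suc.IH)
    also have "\<dots> = Suc (Suc m) choose (j + a + 1)"
      using Suc by simp
    finally show ?thesis .
  qed
qed

lemma choose_mult_choose_diff_commute:
  "(M choose a) * ((M - a) choose b) = (M choose b) * ((M - b) choose a)"
proof (cases "a + b \<le> M")
  case True
  have "(M choose a) * ((M - a) choose b) = (M choose (a + b)) * ((a + b) choose a)"
    using choose_mult[of a "a + b" M] True by simp
  also have "\<dots> = (M choose (a + b)) * ((a + b) choose b)"
    using binomial_symmetric[of a "a + b"] by simp
  also have "\<dots> = (M choose b) * ((M - b) choose a)"
    using choose_mult[of b "a + b" M] True by simp
  finally show ?thesis .
next
  case False
  then have "M < a \<or> M - a < b" "M < b \<or> M - b < a" by auto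
  then show ?thesis by (auto simp: binomial_eq_0)
qed

text \<open>Both sides count the pairs of an \<open>l\<close>-subset and an \<open>n\<close>-subset of an \<open>m\<close>-set
  meeting in \<open>j\<close> elements.\<close>
lemma choose_intersection_count_commute:
  assumes "j \<le> n" "n \<le> m" "j \<le> l" "l \<le> m"
  shows "(m choose l) * ((l choose j) * ((m - l) choose (n - j)))
       = (m choose n) * ((n choose j) * ((m - n) choose (l - j)))"
proof -
  have "(m choose l) * ((l choose j) * ((m - l) choose (n - j)))
      = (m choose j) * (((m - j) choose (l - j)) * ((m - j - (l - j)) choose (n - j)))"
    using choose_mult[of j l m] assms by (simp add: mult.assoc)
  also have "\<dots> = (m choose j) * (((m - j) choose (n - j)) * ((m - j - (n - j)) choose (l - j)))"
    by (simp only: choose_mult_choose_diff_commute)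
  also have "\<dots> = (m choose n) * ((n choose j) * ((m - n) choose (l - j)))"
    using choose_mult[of j n m] assms by (simp add: mult.assoc)
  finally show ?thesis .
qed

text \<open>\<open>meet_count m l n j\<close> is the number of \<open>n\<close>-subsets of an \<open>m\<close>-set that meet a fixed
  \<open>l\<close>-subset in exactly \<open>j\<close> elements; the guard is needed since \<open>n - j\<close> truncates.\<close>
definition meet_count :: "nat \<Rightarrow> nat \<Rightarrow> nat \<Rightarrow> nat \<Rightarrow> nat" where
  "meet_count m l n j = (if j \<le> n then (l choose j) * ((m - l) choose (n - j)) else 0)"

definition meet_less_count :: "nat \<Rightarrow> nat \<Rightarrow> nat \<Rightarrow> nat \<Rightarrow> nat" where
  "meet_less_count m l K n = (\<Sum>j<K. meet_count m l n j)"

lemma sum_meet_count_div_choose: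
  assumes "j \<le> l" "l \<le> m"
  shows "(\<Sum>n\<le>m. real (meet_count m l n j) / real (m choose n)) = real (m + 1) / real (l + 1)"
proof -
  have "(\<Sum>n\<le>m. real (meet_count m l n j) / real (m choose n))
      = (\<Sum>n\<le>m. real ((n choose j) * ((m - n) choose (l - j))) / real (m choose l))"
  proof (rule sum.cong)
    fix n assume n: "n \<in> {..m}"
    show "real (meet_count m l n j) / real (m choose n)
        = real ((n choose j) * ((m - n) choose (l - j))) / real (m choose l)"
    proof (cases "j \<le> n")
      case True
      have "real (m choose l) * real (meet_count m l n j)
          = real (m choose n) * real ((n choose j) * ((m - n) choose (l - j)))"
        using choose_intersection_count_commute[of j n m l] True n assms
        unfolding meet_count_def of_nat_mult[symmetric] by simp
      then show ?thesis using n assms by (simp add: frac_eq_eq mult.commute)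
    qed (simp add: meet_count_def)
  qed simp
  also have "\<dots> = real (\<Sum>n\<le>m. (n choose j) * ((m - n) choose (l - j))) / real (m choose l)"
    by (simp add: sum_divide_distrib)
  also have "\<dots> = real (Suc m choose (l + 1)) / real (m choose l)"
    using sum_choose_mult_choose_diff[where m=m and j=j and a="l - j"] assms by simp
  also have "\<dots> = real (m + 1) / real (l + 1)"
  proof -
    have "real (Suc l) * real (Suc m choose Suc l) = real (Suc m) * real (m choose l)"
      using Suc_times_binomial[of l m] by (simp only: of_nat_mult[symmetric])
    then show ?thesis using assms by (simp add: field_simps)
  qed
  finally show ?thesis .
qed

lemma meet_less_count_eq_choose:
  assumes "l \<le> m" "n < K"
  shows "meet_less_count m l K n = m choose n"
proof -
  have "meet_less_count m l K n = (\<Sum>j\<in>{..<K} \<inter> {j. j \<le> n}. (l choose j) * ((m - l) choose (n - j)))"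
    unfolding meet_less_count_def meet_count_def by (simp add: sum.inter_restrict)
  also have "{..<K} \<inter> {j. j \<le> n} = {..n}" using assms by auto
  finally show ?thesis using vandermonde[of l "m - l" n] assms by simp
qed

lemma sum_meet_less_count_div_choose:
  assumes "l \<le> m"
  shows "(\<Sum>n\<le>m. real (meet_less_count m l K n) / real (m choose n))
       = real (min K (l + 1)) * real (m + 1) / real (l + 1)"
proof -
  have "(\<Sum>n\<le>m. real (meet_less_count m l K n) / real (m choose n))
      = (\<Sum>j<K. \<Sum>n\<le>m. real (meet_count m l n j) / real (m choose n))"
    unfolding meet_less_count_def by (simp add: sum_divide_distrib sum.swap[of _ "{..m}"])
  also have "\<dots> = (\<Sum>j\<in>{..<K} \<inter> {j. j \<le> l}. real (m + 1) / real (l + 1))"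
  proof (subst sum.inter_restrict, simp, rule sum.cong)
    fix j
    have "meet_count m l n j = 0" if "l < j" for n
      using that by (simp add: meet_count_def binomial_eq_0)
    then show "(\<Sum>n\<le>m. real (meet_count m l n j) / real (m choose n))
        = (if j \<in> {j. j \<le> l} then real (m + 1) / real (l + 1) else 0)"
      using sum_meet_count_div_choose[OF _ assms, of j] by auto
  qed simp
  also have "{..<K} \<inter> {j. j \<le> l} = {..<min K (l + 1)}" by auto
  finally show ?thesis by simp
qed

lemma sum_lessThan_inverse_diff_eq_harm:
  assumes "K \<ge> 1"
  shows "(\<Sum>n<K - 1. 1 / real (n + 1) - 1 / real K) = harm K - 1"
proof -
  obtain k where k: "K = Suc k" using assms by (cases K) auto
  have "(\<Sum>n<k. 1 / real (n + 1) - 1 / real K) = harm k - real k / real K"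
    by (simp add: sum_subtractf harm_altdef inverse_eq_divide)
  moreover have "harm K = harm k + 1 / real K"
    using k by (simp add: harm_Suc inverse_eq_divide)
  moreover have "real k / real K = 1 - 1 / real K"
    using k by (simp add: field_simps)
  ultimately show ?thesis using k by simp
qed

lemma sum_meet_less_count_div_choose_min:
  assumes K1: "K \<ge> 1" and lm: "l \<le> m" and Km: "K \<le> m + 2"
  shows "(\<Sum>n\<le>m. real (meet_less_count m l K n) / (real (m choose n) * real (min K (n + 1))))
       = harm K - 1 + real (min K (l + 1)) * real (m + 1) / (real (l + 1) * real K)"
proof -
  text \<open>Below \<open>K - 1\<close> every \<open>n\<close>-subset is counted, so the weight \<open>1 / (n + 1)\<close> differs
    from the uniform weight \<open>1 / K\<close> by a term independent of \<open>l\<close>.\<close>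
  have term_split: "real (meet_less_count m l K n) / (real (m choose n) * real (min K (n + 1)))
      = real (meet_less_count m l K n) / real (m choose n) / real K
        + (if n + 1 < K then 1 / real (n + 1) - 1 / real K else 0)" if "n \<le> m" for n
  proof (cases "n + 1 < K")
    case True
    then show ?thesis using meet_less_count_eq_choose[OF lm, of n K] that K1 by simp
  qed (simp add: min_def)
  have "(\<Sum>n\<le>m. if n + 1 < K then 1 / real (n + 1) - 1 / real K else 0)
      = (\<Sum>n<K - 1. 1 / real (n + 1) - 1 / real K)"
  proof -
    have "{..m} \<inter> {n. n + 1 < K} = {..<K - 1}" using Km K1 by auto
    then show ?thesis
      using sum.inter_restrict[OF finite_atMost[of m], where g="\<lambda>n. 1 / real (n + 1) - 1 / real K" and B="{n. n + 1 < K}"]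
      by simp
  qed
  also have "\<dots> = harm K - 1"
    using K1 by (rule sum_lessThan_inverse_diff_eq_harm)
  finally have "(\<Sum>n\<le>m. if n + 1 < K then 1 / real (n + 1) - 1 / real K else 0) = harm K - 1" .
  moreover have "(\<Sum>n\<le>m. real (meet_less_count m l K n) / (real (m choose n) * real (min K (n + 1))))
      = (\<Sum>n\<le>m. real (meet_less_count m l K n) / real (m choose n) / real K
        + (if n + 1 < K then 1 / real (n + 1) - 1 / real K else 0))"
    by (intro sum.cong refl term_split) simp
  ultimately show ?thesis
    using sum_meet_less_count_div_choose[OF lm, of K]
    by (simp only: sum.distrib sum_divide_distrib[symmetric]) simp
qed

section \<open>Subsets of a given size\<close>

definition subsets_of_size :: "'a set \<Rightarrow> nat \<Rightarrow> 'a set set" where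
  "subsets_of_size A n = {S. S \<subseteq> A \<and> card S = n}"

lemma finite_subsets_of_size: "finite A \<Longrightarrow> finite (subsets_of_size A n)"
  unfolding subsets_of_size_def by (rule finite_subset[of _ "Pow A"]) auto

lemma bij_betw_Int_Diff_subsets_of_size:
  assumes fM: "finite M" and LM: "L \<subseteq> M" and jn: "j \<le> n"
  shows "bij_betw (\<lambda>T. (T \<inter> L, T - L)) {T \<in> subsets_of_size M n. card (T \<inter> L) = j}
           (subsets_of_size L j \<times> subsets_of_size (M - L) (n - j))"
proof -
  have fL: "finite L" using fM LM by (rule finite_subset[rotated])
  show ?thesis
  proof (rule bij_betw_byWitness[where f' = "\<lambda>(A, B). A \<union> B"])
    show "(\<lambda>T. (T \<inter> L, T - L)) ` {T \<in> subsets_of_size M n. card (T \<inter> L) = j}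
        \<subseteq> subsets_of_size L j \<times> subsets_of_size (M - L) (n - j)"
    proof (rule image_subsetI)
      fix T assume T: "T \<in> {T \<in> subsets_of_size M n. card (T \<inter> L) = j}"
      then have "finite T" using fM by (auto simp: subsets_of_size_def intro: finite_subset)
      then show "(T \<inter> L, T - L) \<in> subsets_of_size L j \<times> subsets_of_size (M - L) (n - j)"
        using T by (auto simp: subsets_of_size_def card_Diff_subset_Int)
    qed
    show "(\<lambda>(A, B). A \<union> B) ` (subsets_of_size L j \<times> subsets_of_size (M - L) (n - j))
        \<subseteq> {T \<in> subsets_of_size M n. card (T \<inter> L) = j}"
    proof (rule image_subsetI)
      fix AB assume "AB \<in> subsets_of_size L j \<times> subsets_of_size (M - L) (n - j)"
      then obtain A B where AB: "AB = (A, B)"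
        and A: "A \<in> subsets_of_size L j" and B: "B \<in> subsets_of_size (M - L) (n - j)"
        by blast
      have "finite A" "finite B" "A \<inter> B = {}"
        using A B fL fM by (auto simp: subsets_of_size_def intro: finite_subset)
      then have "card (A \<union> B) = n" using A B jn by (simp add: card_Un_disjoint subsets_of_size_def)
      moreover have "(A \<union> B) \<inter> L = A" using A B by (auto simp: subsets_of_size_def)
      ultimately show "(\<lambda>(A, B). A \<union> B) AB \<in> {T \<in> subsets_of_size M n. card (T \<inter> L) = j}"
        using AB A B LM by (auto simp: subsets_of_size_def)
    qed
  qed (auto simp: subsets_of_size_def)
qed

lemma card_subsets_meet:
  assumes fM: "finite M" and LM: "L \<subseteq> M"
  shows "card {T \<in> subsets_of_size M n. card (T \<inter> L) = j} = meet_count (card M) (card L) n j"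
proof (cases "j \<le> n")
  case False
  have "card (T \<inter> L) \<le> card T" if "T \<subseteq> M" for T
    using that fM by (meson card_mono finite_subset inf_le1)
  then have empty: "{T \<in> subsets_of_size M n. card (T \<inter> L) = j} = {}"
    using False unfolding subsets_of_size_def by fastforce
  show ?thesis using False unfolding empty meet_count_def by simp
next
  case True
  have "finite L" using fM LM by (rule finite_subset[rotated])
  have "card {T \<in> subsets_of_size M n. card (T \<inter> L) = j}
      = card (subsets_of_size L j) * card (subsets_of_size (M - L) (n - j))"
    using bij_betw_Int_Diff_subsets_of_size[OF fM LM True] by (simp add: bij_betw_same_card card_cartesian_product)
  then show ?thesis
    using True \<open>finite L\<close> fM LM by (simp add: subsets_of_size_def n_subsets card_Diff_subset meet_count_def)
qed

lemma card_subsets_meet_less: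
  assumes "finite M" "L \<subseteq> M"
  shows "card {T \<in> subsets_of_size M n. card (T \<inter> L) < K} = meet_less_count (card M) (card L) K n"
proof -
  have "{T \<in> subsets_of_size M n. card (T \<inter> L) < K}
      = (\<Union>j<K. {T \<in> subsets_of_size M n. card (T \<inter> L) = j})"
    by auto
  moreover have "card (\<Union>j<K. {T \<in> subsets_of_size M n. card (T \<inter> L) = j})
      = (\<Sum>j<K. card {T \<in> subsets_of_size M n. card (T \<inter> L) = j})"
    using finite_subsets_of_size[OF assms(1), of n] by (intro card_UN_disjoint) auto
  ultimately show ?thesis
    using card_subsets_meet[OF assms] by (simp add: meet_less_count_def)
qed

lemma subsets_of_size_0: "finite A \<Longrightarrow> subsets_of_size A 0 = {{}}"
  unfolding subsets_of_size_def by (auto simp: card_eq_0_iff dest: rev_finite_subset)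

lemma subsets_of_size_eq_empty:
  assumes "finite A" "card A < n"
  shows "subsets_of_size A n = {}"
proof -
  have "card S \<noteq> n" if "S \<subseteq> A" for S
    using card_mono[OF assms(1) that] assms(2) by linarith
  then show ?thesis unfolding subsets_of_size_def by blast
qed

lemma subsets_of_size_Suc_split:
  assumes fA: "finite A" and x: "x \<in> A"
  shows "subsets_of_size A (Suc n)
       = subsets_of_size (A - {x}) (Suc n) \<union> insert x ` subsets_of_size (A - {x}) n"
proof
  show "subsets_of_size A (Suc n) \<subseteq> subsets_of_size (A - {x}) (Suc n) \<union> insert x ` subsets_of_size (A - {x}) n"
  proof
    fix S assume S: "S \<in> subsets_of_size A (Suc n)"
    show "S \<in> subsets_of_size (A - {x}) (Suc n) \<union> insert x ` subsets_of_size (A - {x}) n"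
    proof (cases "x \<in> S")
      case True
      have "finite S" using S fA by (auto simp: subsets_of_size_def dest: rev_finite_subset)
      then have "S - {x} \<in> subsets_of_size (A - {x}) n"
        using S True by (auto simp: subsets_of_size_def)
      moreover have "S = insert x (S - {x})" using True by auto
      ultimately show ?thesis by blast
    next
      case False
      then show ?thesis using S by (auto simp: subsets_of_size_def)
    qed
  qed
  show "subsets_of_size (A - {x}) (Suc n) \<union> insert x ` subsets_of_size (A - {x}) n \<subseteq> subsets_of_size A (Suc n)"
  proof
    fix S assume "S \<in> subsets_of_size (A - {x}) (Suc n) \<union> insert x ` subsets_of_size (A - {x}) n"
    then consider "S \<in> subsets_of_size (A - {x}) (Suc n)"
      | T where "T \<in> subsets_of_size (A - {x}) n" "S = insert x T"
      by blast
    then show "S \<in> subsets_of_size A (Suc n)"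
    proof cases
      case (2 T)
      then have "finite T" "x \<notin> T" using fA by (auto simp: subsets_of_size_def dest: rev_finite_subset)
      then show ?thesis using 2 x by (auto simp: subsets_of_size_def)
    qed (auto simp: subsets_of_size_def)
  qed
qed

lemma sum_subsets_of_size_Suc_split:
  assumes "finite A" "x \<in> A"
  shows "(\<Sum>S\<in>subsets_of_size A (Suc n). g S)
       = (\<Sum>T\<in>subsets_of_size (A - {x}) (Suc n). g T) + (\<Sum>T\<in>subsets_of_size (A - {x}) n. g (insert x T))"
proof -
  have "inj_on (insert x) (subsets_of_size (A - {x}) n)"
    by (rule inj_onI) (auto simp: subsets_of_size_def insert_ident)
  moreover have "subsets_of_size (A - {x}) (Suc n) \<inter> insert x ` subsets_of_size (A - {x}) n = {}"
    by (auto simp: subsets_of_size_def)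
  ultimately show ?thesis
    using assms finite_subsets_of_size[of "A - {x}"]
    by (simp add: subsets_of_size_Suc_split sum.union_disjoint sum.reindex)
qed

section \<open>Ranks and the KNN utility\<close>

definition rank_in :: "'a::linorder set \<Rightarrow> 'a \<Rightarrow> nat" where
  "rank_in S s = card {t \<in> S. t < s}"

text \<open>Training points are indexed by increasing distance to the test point, so
  \<open>nearest m S\<close> is the set of the \<open>m\<close> nearest neighbours within \<open>S\<close>.\<close>
definition nearest :: "nat \<Rightarrow> 'a::linorder set \<Rightarrow> 'a set" where
  "nearest m S = {s \<in> S. rank_in S s < m}"

lemma rank_in_le_card: "finite S \<Longrightarrow> rank_in S s \<le> card S"
  unfolding rank_in_def by (rule card_mono) auto

lemma rank_in_less_card: "finite S \<Longrightarrow> s \<in> S \<Longrightarrow> rank_in S s < card S"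
  unfolding rank_in_def by (rule psubset_card_mono) auto

lemma rank_in_mono: "finite S \<Longrightarrow> s \<le> t \<Longrightarrow> rank_in S s \<le> rank_in S t"
  unfolding rank_in_def by (rule card_mono) auto

lemma rank_in_strict_mono: "finite S \<Longrightarrow> s \<in> S \<Longrightarrow> s < t \<Longrightarrow> rank_in S s < rank_in S t"
  unfolding rank_in_def by (rule psubset_card_mono) auto

lemma card_rank_in_eq_le_one:
  assumes "finite S"
  shows "card {s \<in> S. rank_in S s = r} \<le> 1"
proof -
  have "s = t" if "s \<in> S" "t \<in> S" "rank_in S s = rank_in S t" for s t
    using that rank_in_strict_mono[OF assms] by (metis less_irrefl linorder_neqE)
  then show ?thesis using assms by (subst One_nat_def, subst card_le_Suc0_iff_eq) auto
qed

lemma rank_in_insert: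
  assumes "finite S" "x \<notin> S"
  shows "rank_in (insert x S) s = rank_in S s + of_bool (x < s)"
proof (cases "x < s")
  case True
  then have "{t \<in> insert x S. t < s} = insert x {t \<in> S. t < s}" by auto
  then show ?thesis using True assms by (simp add: rank_in_def)
next
  case False
  then have "{t \<in> insert x S. t < s} = {t \<in> S. t < s}" by auto
  then show ?thesis using False by (simp add: rank_in_def)
qed

lemma nearest_eq_self: "finite S \<Longrightarrow> card S \<le> m \<Longrightarrow> nearest m S = S"
  using rank_in_less_card unfolding nearest_def by fastforce

lemma nearest_insert:
  assumes "finite S" "x \<notin> S"
  shows "nearest m (insert x S)
       = (if rank_in S x < m then insert x {s \<in> S. rank_in S s + of_bool (x < s) < m}
          else {s \<in> S. rank_in S s + of_bool (x < s) < m})"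
  unfolding nearest_def using rank_in_insert[OF assms] by auto

lemma card_less_nth_sorted:
  fixes xs :: "'a::linorder list"
  assumes sorted: "sorted_wrt (<) xs" and q: "q < length xs"
  shows "card {t \<in> set xs. t < xs ! q} = q"
proof -
  have less_iff: "xs ! r < xs ! q \<longleftrightarrow> r < q" if "r < length xs" for r
    using sorted that q unfolding sorted_wrt_iff_nth_less by (metis linorder_neqE less_asym less_irrefl)
  have "{t \<in> set xs. t < xs ! q} = (\<lambda>r. xs ! r) ` {..<q}"
    using q by (auto simp: in_set_conv_nth less_iff) (use less_trans in blast)
  moreover have "inj_on (\<lambda>r. xs ! r) {..<q}"
    using sorted q by (auto simp: inj_on_def nth_eq_iff_index_eq strict_sorted_iff)
  ultimately show ?thesis by (simp add: card_image)
qed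

lemma rank_in_sorted_list_of_set:
  "finite S \<Longrightarrow> q < card S \<Longrightarrow> rank_in S (sorted_list_of_set S ! q) = q"
  using card_less_nth_sorted[of "sorted_list_of_set S" q] by (simp add: rank_in_def)

lemma sum_pi_S_eq_sum_nearest:
  assumes fS: "finite S" and m: "m \<le> card S"
  shows "(\<Sum>j = 1..m. f (pi_S S j)) = (\<Sum>s\<in>nearest m S. f s)"
proof -
  define xs where "xs = sorted_list_of_set S"
  have len: "length xs = card S" and set: "set xs = S"
    using fS by (simp_all add: xs_def)
  have rank: "rank_in S (xs ! q) = q" if "q < card S" for q
    using fS that by (simp add: xs_def rank_in_sorted_list_of_set)
  have "nearest m S = (\<lambda>q. xs ! q) ` {..<m}"
  proof
    show "(\<lambda>q. xs ! q) ` {..<m} \<subseteq> nearest m S"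
      using m len set rank by (auto simp: nearest_def)
    show "nearest m S \<subseteq> (\<lambda>q. xs ! q) ` {..<m}"
    proof
      fix s assume s: "s \<in> nearest m S"
      then obtain q where "q < length xs" "s = xs ! q"
        using set by (auto simp: nearest_def in_set_conv_nth)
      then show "s \<in> (\<lambda>q. xs ! q) ` {..<m}"
        using s len rank by (auto simp: nearest_def)
    qed
  qed
  moreover have "inj_on (\<lambda>q. xs ! q) {..<m}"
    using m len by (auto simp: inj_on_def nth_eq_iff_index_eq xs_def)
  ultimately show ?thesis
    by (simp add: sum.reindex sum.atLeast1_atMost_eq pi_S_def xs_def)
qed

lemma knn_utility_eq_sum_nearest:
  assumes "finite S" "S \<noteq> {}"
  shows "knn_utility K C y yt S
       = (\<Sum>s\<in>nearest (min K (card S)) S. of_bool (y s = yt)) / real (min K (card S))"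
  using assms sum_pi_S_eq_sum_nearest[of S "min K (card S)" "\<lambda>s. of_bool (y s = yt) :: real"]
  by (simp add: knn_utility_def of_bool_def)

text \<open>No point of \<open>T\<close> lies strictly between \<open>i\<close> and \<open>i + 1\<close>, so both insertions leave
  the ranks of the points of \<open>T\<close> alike.\<close>
lemma knn_utility_insert_diff_insert_Suc:
  assumes fT: "finite T" and i: "i \<notin> T" and Suc_i: "Suc i \<notin> T"
  shows "knn_utility K C y yt (insert i T) - knn_utility K C y yt (insert (Suc i) T)
       = (if rank_in T i < K then of_bool (y i = yt) - of_bool (y (Suc i) = yt) else 0)
         / real (min K (card T + 1))"
proof -
  define f where "f s = (of_bool (y s = yt) :: real)" for s
  define m where "m = min K (card T + 1)"
  define Q where "Q = {s \<in> T. rank_in T s + of_bool (i < s) < m}"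
  have rank_Suc: "rank_in T (Suc i) = rank_in T i"
  proof -
    have "{t \<in> T. t < Suc i} = {t \<in> T. t < i}" using i by (auto simp: less_Suc_eq)
    then show ?thesis by (simp add: rank_in_def)
  qed
  have "rank_in T i < m \<longleftrightarrow> rank_in T i < K"
    using rank_in_le_card[OF fT, of i] by (auto simp: m_def)
  moreover have "{s \<in> T. rank_in T s + of_bool (Suc i < s) < m} = Q"
  proof -
    have "Suc i < s \<longleftrightarrow> i < s" if "s \<in> T" for s
      using that Suc_i by (metis Suc_lessD Suc_lessI)
    then show ?thesis unfolding Q_def by (intro Collect_cong) auto
  qed
  ultimately have nearest_j: "nearest m (insert j T) = (if rank_in T i < K then insert j Q else Q)"
    if "j = i \<or> j = Suc i" for j
    using that nearest_insert[OF fT i, of m] nearest_insert[OF fT Suc_i, of m] rank_Suc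
    unfolding Q_def by auto
  have "knn_utility K C y yt (insert j T) = (\<Sum>s\<in>nearest m (insert j T). f s) / real m"
    if "j \<notin> T" for j
    using knn_utility_eq_sum_nearest[of "insert j T"] fT that by (simp add: m_def f_def)
  moreover have "j \<notin> Q" if "j \<notin> T" for j using that by (simp add: Q_def)
  moreover have "finite Q" using fT by (simp add: Q_def)
  ultimately show ?thesis
    using i Suc_i nearest_j[of i] nearest_j[of "Suc i"]
    by (simp add: f_def m_def diff_divide_distrib[symmetric])
qed

lemma abs_mean_insert_diff_le:
  fixes a A :: real
  assumes "0 \<le> a" "a \<le> 1" "0 \<le> A" "A \<le> real n" "n > 0"
  shows "\<bar>(a + A) / real (n + 1) - A / real n\<bar> \<le> 1 / real (n + 1)"
proof -
  have "real n * a \<le> real n" "0 \<le> real n * a"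
    using assms by (simp_all add: mult_left_le)
  then have bound: "\<bar>real n * a - A\<bar> \<le> real n"
    using assms by (intro abs_leI) linarith+
  have "(a + A) / real (n + 1) - A / real n = (real n * a - A) / (real n * real (n + 1))"
    using assms by (simp add: field_simps)
  then have "\<bar>(a + A) / real (n + 1) - A / real n\<bar> = \<bar>real n * a - A\<bar> / (real n * real (n + 1))"
    by (simp add: abs_divide)
  also have "\<dots> \<le> real n / (real n * real (n + 1))"
    using bound by (rule divide_right_mono) simp
  also have "\<dots> = 1 / real (n + 1)"
    using assms by simp
  finally show ?thesis .
qed

lemma abs_knn_utility_insert_diff_le_small:
  assumes fS: "finite S" and i: "i \<notin> S" and ne: "S \<noteq> {}" and small: "card S < K"
  shows "\<bar>knn_utility K C y yt (insert i S) - knn_utility K C y yt S\<bar> \<le> 1 / real (card S + 1)"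
proof -
  define f where "f s = (of_bool (y s = yt) :: real)" for s
  have "nearest (card S) S = S" "nearest (card S + 1) (insert i S) = insert i S"
    using fS i by (simp_all add: nearest_eq_self)
  then have "knn_utility K C y yt S = sum f S / real (card S)"
    "knn_utility K C y yt (insert i S) = (f i + sum f S) / real (card S + 1)"
    using knn_utility_eq_sum_nearest[of S K C y yt] knn_utility_eq_sum_nearest[of "insert i S" K C y yt]
      fS i ne small
    by (simp_all add: min_absorb2 f_def)
  moreover have "\<bar>(f i + sum f S) / real (card S + 1) - sum f S / real (card S)\<bar> \<le> 1 / real (card S + 1)"
  proof (rule abs_mean_insert_diff_le)
    show "sum f S \<le> real (card S)"
      using sum_mono[of S f "\<lambda>_. 1"] by (simp add: f_def)
  qed (use fS ne in \<open>auto simp: f_def sum_nonneg card_gt_0_iff\<close>)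
  ultimately show ?thesis by simp
qed

text \<open>If \<open>i\<close> enters the \<open>K\<close> nearest neighbours, it displaces the former \<open>K\<close>-th one,
  of which there is at most one.\<close>
lemma abs_knn_utility_insert_diff_le_large:
  assumes K1: "K \<ge> 1" and fS: "finite S" and i: "i \<notin> S" and large: "K \<le> card S"
  shows "\<bar>knn_utility K C y yt (insert i S) - knn_utility K C y yt S\<bar>
       \<le> of_bool (rank_in S i < K) / real K"
proof -
  define f where "f s = (of_bool (y s = yt) :: real)" for s
  define Q where "Q = {s \<in> S. rank_in S s + of_bool (i < s) < K}"
  define B where "B = {s \<in> S. i < s \<and> rank_in S s + 1 = K}"
  have fQB: "finite Q" "finite B" using fS by (simp_all add: Q_def B_def)
  have "S \<noteq> {}" using large K1 by auto
  have diff_eq: "knn_utility K C y yt (insert i S) - knn_utility K C y yt S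
      = ((\<Sum>s\<in>nearest K (insert i S). f s) - (\<Sum>s\<in>nearest K S. f s)) / real K"
    using knn_utility_eq_sum_nearest[of S K C y yt] knn_utility_eq_sum_nearest[of "insert i S" K C y yt]
      fS i large K1 \<open>S \<noteq> {}\<close>
    by (auto simp: f_def min_absorb1 diff_divide_distrib)
  show ?thesis
  proof (cases "rank_in S i < K")
    case False
    have "rank_in S s + of_bool (i < s) < K \<longleftrightarrow> rank_in S s < K" for s
      using False rank_in_mono[OF fS, of i s] by (cases "i < s") auto
    then have "nearest K S = Q" unfolding nearest_def Q_def by simp
    moreover have "nearest K (insert i S) = Q"
      using nearest_insert[OF fS i, of K] False by (simp add: Q_def)
    ultimately show ?thesis using diff_eq by simp
  next
    case True
    have "nearest K S = Q \<union> B" "Q \<inter> B = {}"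
      unfolding nearest_def Q_def B_def by auto
    moreover have "nearest K (insert i S) = insert i Q"
      using nearest_insert[OF fS i, of K] True by (simp add: Q_def)
    ultimately have "knn_utility K C y yt (insert i S) - knn_utility K C y yt S = (f i - sum f B) / real K"
      using diff_eq fQB i by (simp add: Q_def sum.union_disjoint)
    moreover have "card B \<le> 1"
    proof -
      have "B \<subseteq> {s \<in> S. rank_in S s = K - 1}" unfolding B_def by auto
      then have "card B \<le> card {s \<in> S. rank_in S s = K - 1}" using fS by (intro card_mono) auto
      then show ?thesis using card_rank_in_eq_le_one[OF fS, of "K - 1"] by linarith
    qed
    then have "0 \<le> sum f B" "sum f B \<le> 1"
      using sum_mono[of B f "\<lambda>_. 1"] by (auto simp: f_def sum_nonneg)
    ultimately show ?thesis using True K1 by (auto simp: f_def abs_divide divide_right_mono)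
  qed
qed

lemma abs_knn_utility_insert_diff_le:
  assumes "K \<ge> 1" "finite S" "i \<notin> S" "S \<noteq> {}"
  shows "\<bar>knn_utility K C y yt (insert i S) - knn_utility K C y yt S\<bar>
       \<le> of_bool (rank_in S i < K) / real (min K (card S + 1))"
proof (cases "card S < K")
  case True
  then show ?thesis
    using abs_knn_utility_insert_diff_le_small[OF assms(2-4) True] rank_in_le_card[OF assms(2), of i]
    by simp
next
  case False
  then have "min K (card S + 1) = K" by simp
  then show ?thesis
    using abs_knn_utility_insert_diff_le_large[OF assms(1-3), of C y yt] False by (simp only:)
qed

section \<open>Shapley values of the KNN utility\<close>

definition marginal_sum :: "('a set \<Rightarrow> real) \<Rightarrow> 'a set \<Rightarrow> 'a \<Rightarrow> nat \<Rightarrow> real" where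
  "marginal_sum v A i n = (\<Sum>S\<in>subsets_of_size (A - {i}) n. v (insert i S) - v S)"

definition swap_sum :: "('a set \<Rightarrow> real) \<Rightarrow> 'a set \<Rightarrow> 'a \<Rightarrow> 'a \<Rightarrow> nat \<Rightarrow> real" where
  "swap_sum v A i j n = (\<Sum>T\<in>subsets_of_size (A - {i, j}) n. v (insert i T) - v (insert j T))"

lemma marginal_sum_0: "finite A \<Longrightarrow> marginal_sum v A i 0 = v {i} - v {}"
  using subsets_of_size_0[of "A - {i}"] by (simp add: marginal_sum_def)

lemma marginal_sum_diff_0:
  "finite A \<Longrightarrow> marginal_sum v A i 0 - marginal_sum v A j 0 = swap_sum v A i j 0"
  by (simp add: marginal_sum_def swap_sum_def subsets_of_size_0)

lemma marginal_sum_diff_Suc: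
  assumes fA: "finite A" and "i \<in> A" "j \<in> A" "i \<noteq> j"
  shows "marginal_sum v A i (Suc n) - marginal_sum v A j (Suc n) = swap_sum v A i j (Suc n) + swap_sum v A i j n"
proof -
  have "A - {i} - {j} = A - {i, j}" "A - {j} - {i} = A - {i, j}" by auto
  then have "marginal_sum v A i (Suc n)
      = (\<Sum>T\<in>subsets_of_size (A - {i, j}) (Suc n). v (insert i T) - v T)
        + (\<Sum>T\<in>subsets_of_size (A - {i, j}) n. v (insert i (insert j T)) - v (insert j T))"
    "marginal_sum v A j (Suc n)
      = (\<Sum>T\<in>subsets_of_size (A - {i, j}) (Suc n). v (insert j T) - v T)
        + (\<Sum>T\<in>subsets_of_size (A - {i, j}) n. v (insert j (insert i T)) - v (insert i T))"
    using assms sum_subsets_of_size_Suc_split[of "A - {i}" j] sum_subsets_of_size_Suc_split[of "A - {j}" i]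
    by (simp_all add: marginal_sum_def)
  moreover have "insert j (insert i T) = insert i (insert j T)" for T by auto
  ultimately show ?thesis
    by (simp add: swap_sum_def sum_subtractf)
qed

lemma shapley_eq_sum_marginal_sum:
  "shapley N K C y yt i
     = (1 / real N) * (\<Sum>n<N. marginal_sum (knn_utility K C y yt) {1..N} i n / real ((N - 1) choose n))"
  unfolding shapley_def marginal_sum_def subsets_of_size_def
  by (simp add: sum.atLeast1_atMost_eq)

lemma inverse_choose_add_inverse_choose_Suc:
  assumes "n < m"
  shows "1 / real (m choose n) + 1 / real (m choose Suc n) = real (m + 1) / (real m * real ((m - 1) choose n))"
proof -
  have pos: "real m * real ((m - 1) choose n) > 0" using assms by simp
  have "real (m - n) * real (m choose n) = real m * real ((m - 1) choose n)"
    using binomial_absorb_comp[of m n] by (metis of_nat_mult)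
  then have "1 / real (m choose n) = real (m - n) / (real m * real ((m - 1) choose n))"
    using pos assms by (simp add: field_simps)
  moreover have "real (Suc n) * real (m choose Suc n) = real m * real ((m - 1) choose n)"
    using binomial_absorption[of n m] by (metis of_nat_mult)
  then have "1 / real (m choose Suc n) = real (Suc n) / (real m * real ((m - 1) choose n))"
    using pos assms by (simp add: field_simps)
  moreover have "real (m - n) + real (Suc n) = real (m + 1)" using assms by simp
  ultimately show ?thesis by (simp add: add_divide_distrib[symmetric])
qed

text \<open>Pascal's rule for the Shapley weights: a sequence whose terms are sums of two
  neighbouring values of \<open>G\<close> has its weighted sum over row \<open>m\<close> collapse to row \<open>m - 1\<close>.\<close>
lemma sum_adjacent_sums_div_choose:
  fixes D G :: "nat \<Rightarrow> real"
  assumes m: "m \<ge> 1" and G: "G m = 0"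
    and D0: "D 0 = G 0" and DSuc: "\<And>n. D (Suc n) = G (Suc n) + G n"
  shows "(\<Sum>n\<le>m. D n / real (m choose n)) = real (m + 1) / real m * (\<Sum>n<m. G n / real ((m - 1) choose n))"
proof -
  obtain k where k: "m = Suc k" using m by (cases m) auto
  have "(\<Sum>n\<le>m. D n / real (m choose n))
      = (\<Sum>n\<le>m. G n / real (m choose n)) + (\<Sum>n<m. G n / real (m choose Suc n))"
    unfolding k sum.atMost_Suc_shift lessThan_Suc_atMost
    by (simp add: D0 DSuc add_divide_distrib sum.distrib del: sum.atMost_Suc binomial_Suc_Suc)
  also have "(\<Sum>n\<le>m. G n / real (m choose n)) = (\<Sum>n<m. G n / real (m choose n))"
    using G unfolding k lessThan_Suc_atMost by simp
  also have "(\<Sum>n<m. G n / real (m choose n)) + (\<Sum>n<m. G n / real (m choose Suc n))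
      = (\<Sum>n<m. G n * (1 / real (m choose n) + 1 / real (m choose Suc n)))"
    by (simp add: sum.distrib[symmetric] algebra_simps)
  also have "\<dots> = real (m + 1) / real m * (\<Sum>n<m. G n / real ((m - 1) choose n))"
    by (simp add: sum_distrib_left inverse_choose_add_inverse_choose_Suc mult.commute)
  finally show ?thesis .
qed

lemma knn_utility_empty: "knn_utility K C y yt {} = 1 / real C"
  by (simp add: knn_utility_def)

lemma knn_utility_singleton: "K \<ge> 1 \<Longrightarrow> knn_utility K C y yt {i} = of_bool (y i = yt)"
  by (simp add: knn_utility_def pi_S_def)

lemma rank_in_eq_card_Int_lessThan:
  assumes "T \<subseteq> {1..N}"
  shows "rank_in T i = card (T \<inter> {1..<i})"
proof -
  have "{t \<in> T. t < i} = T \<inter> {1..<i}" using assms by auto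
  then show ?thesis by (simp add: rank_in_def)
qed

lemma swap_sum_knn_adjacent:
  assumes i: "1 \<le> i" "i < N"
  shows "swap_sum (knn_utility K C y yt) {1..N} i (Suc i) n
       = (of_bool (y i = yt) - of_bool (y (Suc i) = yt)) * real (meet_less_count (N - 2) (i - 1) K n)
         / real (min K (n + 1))"
proof -
  define M where "M = {1..N} - {i, Suc i}"
  define c where "c = (of_bool (y i = yt) - of_bool (y (Suc i) = yt) :: real) / real (min K (n + 1))"
  have fM: "finite M" and LM: "{1..<i} \<subseteq> M" using i by (auto simp: M_def)
  have "card M = N - 2" using i by (simp add: M_def card_Diff_subset)
  have "knn_utility K C y yt (insert i T) - knn_utility K C y yt (insert (Suc i) T)
      = (if card (T \<inter> {1..<i}) < K then c else 0)" if "T \<in> subsets_of_size M n" for T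
  proof -
    have T: "T \<subseteq> M" "card T = n" using that by (auto simp: subsets_of_size_def)
    then have "finite T" "i \<notin> T" "Suc i \<notin> T" "T \<subseteq> {1..N}"
      using finite_subset[OF _ fM] by (auto simp: M_def)
    then show ?thesis
      using knn_utility_insert_diff_insert_Suc[of T i K C y yt] T(2)
      by (simp add: c_def rank_in_eq_card_Int_lessThan)
  qed
  then have "swap_sum (knn_utility K C y yt) {1..N} i (Suc i) n
      = (\<Sum>T\<in>subsets_of_size M n. if card (T \<inter> {1..<i}) < K then c else 0)"
    unfolding swap_sum_def M_def[symmetric] by (rule sum.cong[OF refl])
  also have "\<dots> = real (card {T \<in> subsets_of_size M n. card (T \<inter> {1..<i}) < K}) * c"
    using finite_subsets_of_size[OF fM] by (simp add: sum.inter_filter[symmetric])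
  also have "\<dots> = real (meet_less_count (N - 2) (i - 1) K n) * c"
    using card_subsets_meet_less[OF fM LM] \<open>card M = N - 2\<close> by simp
  finally show ?thesis by (simp add: c_def)
qed

lemma shapley_diff_Suc:
  assumes i: "1 \<le> i" "i < N" and K: "1 \<le> K" "K \<le> N"
  shows "shapley N K C y yt i - shapley N K C y yt (Suc i)
       = (of_bool (y i = yt) - of_bool (y (Suc i) = yt)) / real (N - 1)
         * (harm K - 1 + real (min K i) * real (N - 1) / (real i * real K))"
proof -
  define v where "v = knn_utility K C y yt"
  define c where "c = (of_bool (y i = yt) - of_bool (y (Suc i) = yt) :: real)"
  define G where "G n = swap_sum v {1..N} i (Suc i) n" for n
  define m where "m = N - 1"
  have N: "N = Suc m" and m: "m \<ge> 1" using i by (auto simp: m_def)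
  have "G m = 0"
  proof -
    have "card ({1..N} - {i, Suc i}) < m" using i by (simp add: card_Diff_subset N)
    then show ?thesis by (simp add: G_def swap_sum_def subsets_of_size_eq_empty)
  qed
  moreover have "marginal_sum v {1..N} i 0 - marginal_sum v {1..N} (Suc i) 0 = G 0"
    by (simp add: G_def marginal_sum_diff_0)
  moreover have "marginal_sum v {1..N} i (Suc n) - marginal_sum v {1..N} (Suc i) (Suc n) = G (Suc n) + G n" for n
    using i by (simp add: G_def marginal_sum_diff_Suc)
  ultimately have "(\<Sum>n\<le>m. (marginal_sum v {1..N} i n - marginal_sum v {1..N} (Suc i) n) / real (m choose n))
      = real N / real m * (\<Sum>n<m. G n / real ((m - 1) choose n))"
    using sum_adjacent_sums_div_choose[OF m, of G] N by simp
  moreover have "shapley N K C y yt i - shapley N K C y yt (Suc i)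
      = (1 / real N) * (\<Sum>n\<le>m. (marginal_sum v {1..N} i n - marginal_sum v {1..N} (Suc i) n) / real (m choose n))"
    unfolding shapley_eq_sum_marginal_sum v_def N lessThan_Suc_atMost
    by (simp add: sum_subtractf diff_divide_distrib right_diff_distrib)
  moreover have "(\<Sum>n<m. G n / real ((m - 1) choose n))
      = c * (\<Sum>n\<le>m - 1. real (meet_less_count (m - 1) (i - 1) K n) / (real ((m - 1) choose n) * real (min K (n + 1))))"
  proof -
    have "G n = c * real (meet_less_count (m - 1) (i - 1) K n) / real (min K (n + 1))" for n
      using swap_sum_knn_adjacent[OF i, of K C y yt n] by (simp add: G_def v_def c_def m_def numeral_2_eq_2)
    moreover have "{..<m} = {..m - 1}" using m by auto
    ultimately show ?thesis by (simp add: sum_distrib_left mult.commute)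
  qed
  moreover have "(\<Sum>n\<le>m - 1. real (meet_less_count (m - 1) (i - 1) K n) / (real ((m - 1) choose n) * real (min K (n + 1))))
      = harm K - 1 + real (min K i) * real m / (real i * real K)"
    using sum_meet_less_count_div_choose_min[of K "i - 1" "m - 1"] i K m by (simp add: N)
  ultimately show ?thesis using m by (simp add: c_def m_def)
qed

lemma abs_marginal_sum_knn_le:
  assumes i: "1 \<le> i" "i \<le> N" and K: "1 \<le> K" and n: "1 \<le> n"
  shows "\<bar>marginal_sum (knn_utility K C y yt) {1..N} i n\<bar>
       \<le> real (meet_less_count (N - 1) (i - 1) K n) / real (min K (n + 1))"
proof -
  define M where "M = {1..N} - {i}"
  define b where "b = 1 / real (min K (n + 1))"
  have fM: "finite M" and LM: "{1..<i} \<subseteq> M" using i by (auto simp: M_def)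
  have "card M = N - 1" using i by (simp add: M_def)
  have bound: "\<bar>knn_utility K C y yt (insert i S) - knn_utility K C y yt S\<bar>
      \<le> (if card (S \<inter> {1..<i}) < K then b else 0)" if "S \<in> subsets_of_size M n" for S
  proof -
    have S: "S \<subseteq> M" "card S = n" using that by (auto simp: subsets_of_size_def)
    then have "finite S" "i \<notin> S" "S \<subseteq> {1..N}" "S \<noteq> {}"
      using finite_subset[OF _ fM] n by (auto simp: M_def)
    then show ?thesis
      using abs_knn_utility_insert_diff_le[OF K, of S i C y yt] S(2)
      by (cases "card (S \<inter> {1..<i}) < K") (simp_all add: b_def rank_in_eq_card_Int_lessThan)
  qed
  have "\<bar>marginal_sum (knn_utility K C y yt) {1..N} i n\<bar>
      \<le> (\<Sum>S\<in>subsets_of_size M n. \<bar>knn_utility K C y yt (insert i S) - knn_utility K C y yt S\<bar>)"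
    unfolding marginal_sum_def M_def[symmetric] by (rule sum_abs)
  also have "\<dots> \<le> (\<Sum>S\<in>subsets_of_size M n. if card (S \<inter> {1..<i}) < K then b else 0)"
    using bound by (rule sum_mono)
  also have "\<dots> = real (card {S \<in> subsets_of_size M n. card (S \<inter> {1..<i}) < K}) * b"
    using finite_subsets_of_size[OF fM] by (simp add: sum.inter_filter[symmetric])
  also have "\<dots> = real (meet_less_count (N - 1) (i - 1) K n) * b"
    using card_subsets_meet_less[OF fM LM] \<open>card M = N - 1\<close> by simp
  finally show ?thesis by (simp add: b_def)
qed

lemma abs_sum_marginal_sum_knn_le:
  assumes i: "1 \<le> i" "i \<le> N" and K: "1 \<le> K" "K \<le> N"
  shows "\<bar>\<Sum>n<N - 1. marginal_sum (knn_utility K C y yt) {1..N} i (Suc n) / real ((N - 1) choose Suc n)\<bar>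
       \<le> harm K - 2 + real (min K i) * real N / (real i * real K)"
proof -
  define m where "m = N - 1"
  define b where "b n = real (meet_less_count m (i - 1) K n) / real (min K (n + 1))" for n
  have N: "N = Suc m" using i by (simp add: m_def)
  have "\<bar>\<Sum>n<m. marginal_sum (knn_utility K C y yt) {1..N} i (Suc n) / real (m choose Suc n)\<bar>
      \<le> (\<Sum>n<m. \<bar>marginal_sum (knn_utility K C y yt) {1..N} i (Suc n)\<bar> / real (m choose Suc n))"
    by (rule order_trans[OF sum_abs]) (simp add: abs_divide)
  also have "\<dots> \<le> (\<Sum>n<m. b (Suc n) / real (m choose Suc n))"
  proof (rule sum_mono)
    fix n
    show "\<bar>marginal_sum (knn_utility K C y yt) {1..N} i (Suc n)\<bar> / real (m choose Suc n)
        \<le> b (Suc n) / real (m choose Suc n)"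
      using abs_marginal_sum_knn_le[OF i K(1), of "Suc n" C y yt]
      unfolding b_def m_def by (rule divide_right_mono) simp_all
  qed
  also have "\<dots> = harm K - 2 + real (min K i) * real N / (real i * real K)"
  proof -
    have "(\<Sum>n\<le>m. b n / real (m choose n)) = harm K - 1 + real (min K i) * real N / (real i * real K)"
      using sum_meet_less_count_div_choose_min[of K "i - 1" m] i K by (simp add: b_def N mult.commute)
    moreover have "b 0 = 1"
      using meet_less_count_eq_choose[of "i - 1" m 0 K] i K by (simp add: b_def m_def)
    ultimately show ?thesis by (simp add: sum.atMost_shift)
  qed
  finally show ?thesis by (simp add: m_def)
qed

lemma abs_shapley_sub_baseline_le_harm:
  assumes i: "1 \<le> i" "i \<le> N" and K: "1 \<le> K" "K \<le> N"
  shows "\<bar>shapley N K C y yt i - (1 / real N) * (1 / 2 - 1 / real C)\<bar>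
       \<le> (1 / real N) * (harm K - 3 / 2) + real (min K i) / (real i * real K)"
proof -
  define R where "R = (\<Sum>n<N - 1. marginal_sum (knn_utility K C y yt) {1..N} i (Suc n) / real ((N - 1) choose Suc n))"
  obtain m where N: "N = Suc m" using i by (cases N) auto
  have "marginal_sum (knn_utility K C y yt) {1..N} i 0 = of_bool (y i = yt) - 1 / real C"
    using K by (simp add: marginal_sum_0 knn_utility_singleton knn_utility_empty)
  then have "shapley N K C y yt i = (1 / real N) * (of_bool (y i = yt) - 1 / real C + R)"
    unfolding shapley_eq_sum_marginal_sum R_def
    by (simp add: N sum.lessThan_Suc_shift del: sum.lessThan_Suc)
  then have "shapley N K C y yt i - (1 / real N) * (1 / 2 - 1 / real C)
      = (1 / real N) * ((of_bool (y i = yt) - 1 / 2) + R)"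
    by (simp add: algebra_simps)
  then have "\<bar>shapley N K C y yt i - (1 / real N) * (1 / 2 - 1 / real C)\<bar>
      = (1 / real N) * \<bar>(of_bool (y i = yt) - 1 / 2) + R\<bar>"
    by (simp only: abs_mult) simp
  also have "\<dots> \<le> (1 / real N) * (1 / 2 + (harm K - 2 + real (min K i) * real N / (real i * real K)))"
    using abs_triangle_ineq[of "of_bool (y i = yt) - 1 / 2" R] abs_sum_marginal_sum_knn_le[OF i K, of C y yt]
    unfolding R_def[symmetric] by (intro mult_left_mono) (simp_all add: of_bool_def, linarith)
  also have "\<dots> = (1 / real N) * (harm K - 3 / 2) + real (min K i) / (real i * real K)"
    using N by (simp add: field_simps)
  finally show ?thesis .
qed

lemma harm_minus_three_halves_le:
  "K \<ge> 1 \<Longrightarrow> harm K - 3 / 2 \<le> (\<Sum>j = 2..K - 1. 1 / real (j + 1))"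
proof (induction K rule: nat_induct_at_least)
  case base
  then show ?case by (simp add: harm_expand)
next
  case (Suc K)
  show ?case
  proof (cases "K = 1")
    case True
    then show ?thesis by (simp add: harm_Suc harm_expand(1))
  next
    case False
    then have "(\<Sum>j = 2..Suc K - 1. 1 / real (j + 1)) = (\<Sum>j = 2..K - 1. 1 / real (j + 1)) + 1 / real (Suc K)"
      using Suc.hyps by (cases K) (auto simp: sum.cl_ivl_Suc)
    then show ?thesis using Suc.IH by (simp add: harm_Suc inverse_eq_divide)
  qed
qed

lemma min_div_mult_le_inverse_max:
  assumes "Ks \<le> i" "1 \<le> i" "1 \<le> K"
  shows "real (min K i) / (real i * real K) \<le> 1 / real (max Ks K)"
proof -
  have "real (min K i) / (real i * real K) = 1 / real (max i K)"
    using assms by (cases "K \<le> i") (simp_all add: min_def max_def field_simps)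
  also have "\<dots> \<le> 1 / real (max Ks K)"
    using assms by (intro divide_left_mono) auto
  finally show ?thesis .
qed

lemma abs_shapley_sub_baseline_le:
  assumes "Ks \<le> i" "1 \<le> i" "i \<le> N" "1 \<le> K" "K \<le> N"
  shows "\<bar>shapley N K C y yt i - (1 / real N) * (1 / 2 - 1 / real C)\<bar>
       \<le> (1 / real N) * (\<Sum>j = 2..K - 1. 1 / real (j + 1)) + 1 / real (max Ks K)"
proof -
  have "\<bar>shapley N K C y yt i - (1 / real N) * (1 / 2 - 1 / real C)\<bar>
      \<le> (1 / real N) * (harm K - 3 / 2) + real (min K i) / (real i * real K)"
    using assms by (intro abs_shapley_sub_baseline_le_harm) auto
  also have "\<dots> \<le> (1 / real N) * (\<Sum>j = 2..K - 1. 1 / real (j + 1)) + 1 / real (max Ks K)"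
    using assms harm_minus_three_halves_le[of K] min_div_mult_le_inverse_max[of Ks i K]
    by (intro add_mono mult_left_mono) auto
  finally show ?thesis .
qed

lemma eq_at_upper_of_eq_Suc:
  fixes f :: "nat \<Rightarrow> 'a"
  assumes "\<And>n. a \<le> n \<Longrightarrow> n < b \<Longrightarrow> f n = f (Suc n)" "a \<le> i" "i \<le> b"
  shows "f i = f b"
  using assms(3)
proof (induction rule: inc_induct)
  case (step n)
  then show ?case using assms(1,2) by simp
qed simp

theorem theorem3:
  fixes N K Kstar :: nat
    and x :: "nat \<Rightarrow> 'a::euclidean_space" and xtest :: 'a
    and Y :: "'c set" and y :: "nat \<Rightarrow> 'c" and ytest :: 'c
    and phihat :: "nat \<Rightarrow> real"
  assumes finY: "finite Y" and CY: "card Y \<ge> 1"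
    and ylab: "\<forall>i \<in> {1..N}. y i \<in> Y" and ytestlab: "ytest \<in> Y"
    and Kpos: "K \<ge> 1" and N2: "N \<ge> 2" and NK: "N \<ge> K"
    and sorted: "\<forall>i j. 1 \<le> i \<longrightarrow> i \<le> j \<longrightarrow> j \<le> N \<longrightarrow>
                   norm (x i - xtest) \<le> norm (x j - xtest)"
    and Ks1: "1 \<le> Kstar" and KsN: "Kstar < N"
    and ph_base: "\<forall>i. Kstar \<le> i \<and> i \<le> N \<longrightarrow>
                    phihat i = (1 / real N) * (1 / 2 - 1 / real (card Y))"
    and ph_rec: "\<forall>i. 1 \<le> i \<and> i < Kstar \<longrightarrow>
                    phihat i = phihat (i + 1) +
                      ((if y i = ytest then 1 else 0) - (if y (i + 1) = ytest then 1 else 0)) / real (N - 1) *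
                      ((\<Sum>j = 1..K. 1 / real j) +
                       (1 / real K) * (real (min i K) * real (N - 1) / real i - real K))"
  shows "Max ((\<lambda>i. \<bar>phihat i - shapley N K (card Y) y ytest i\<bar>) ` {1..N})
           \<le> (1 / real N) * (\<Sum>j = 2..K - 1. 1 / real (j + 1)) + 1 / real (max Kstar K)"
proof -
  define e where "e i = phihat i - shapley N K (card Y) y ytest i" for i
  define B where "B = (1 / real N) * (\<Sum>j = 2..K - 1. 1 / real (j + 1)) + 1 / real (max Kstar K)"
  have tail: "\<bar>e j\<bar> \<le> B" if "Kstar \<le> j" "j \<le> N" for j
    using that ph_base abs_shapley_sub_baseline_le[of Kstar j N K "card Y" y ytest] Ks1 Kpos NK
    by (simp add: e_def B_def abs_minus_commute)
  have e_Suc: "e i = e (Suc i)" if "1 \<le> i" "i < Kstar" for i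
  proof -
    have "(\<Sum>j = 1..K. 1 / real j) + (1 / real K) * (real (min i K) * real (N - 1) / real i - real K)
        = harm K - 1 + real (min K i) * real (N - 1) / (real i * real K)"
      using Kpos by (simp add: harm_def inverse_eq_divide field_simps min.commute)
    then show ?thesis
      using ph_rec shapley_diff_Suc[of i N K "card Y" y ytest] that KsN Kpos NK
      by (simp add: e_def of_bool_def)
  qed
  have e_Kstar: "e i = e Kstar" if "1 \<le> i" "i \<le> Kstar" for i
    using eq_at_upper_of_eq_Suc[of 1 Kstar e i] e_Suc that by blast
  have "\<bar>e i\<bar> \<le> B" if "i \<in> {1..N}" for i
  proof (cases "Kstar \<le> i")
    case False
    then have "e i = e Kstar" using that by (intro e_Kstar) auto
    then show ?thesis using tail[of Kstar] KsN by simp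
  qed (use that tail in auto)
  then show ?thesis
    unfolding e_def B_def using N2 by (intro Max.boundedI) auto
qed

end
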